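(* Let $\mathbb{F}$ be a field and $\mathcal{H}_o=(Q_0,Q_1,\mathbb{B}^{\mathrm{oh}})$ an oriented hypergraph such that, in $F(\mathcal{H}_o)$, all hyperedges share a common nonempty source-side vertex set $S$ and the target-side vertex sets $H_1,\dots,H_r$ ($r=|Q_1|$) of the hyperedges are pairwise distinct. Then the macrograph of $F(\mathcal{H}_o)$ is a star, and $\delta(F(\mathcal{H}_o))>0$ if and only if the indicator vectors $\mathbf{1}_{H_1},\dots,\mathbf{1}_{H_r}\in\mathbb{F}^{Q_0}$ are affinely dependent over $\mathbb{F}$. In particular $\delta(F(\mathcal{H}_o))>0$ implies $r\ge4$.
   Context: An oriented hypergraph is $\mathcal{H}_o=(Q_0,Q_1,\mathbb{B}^{\mathrm{oh}})$ with finite sets $Q_0,Q_1$ and $\mathbb{B}^{\mathrm{oh}}\in\{-1,0,+1\}^{Q_0\times Q_1}$. For a hyperedge $e$, its source-side vertex set is $\{v:\mathbb{B}^{\mathrm{oh}}_{v,e}=-1\}$ and its target-side vertex set is $\{v:\mathbb{B}^{\mathrm{oh}}_{v,e}=+1\}$. $F(\mathcal{H}_o)=(Q_0,Q_1,\beta_F)$ has $\beta_F(\mathbf{1}_e)=(A_e,B_e)$ with $A_e$ the indicator vector (in $\mathbb{F}^{Q_0}=T^1(\mathbb{F}^{Q_0})$) of the source-side set and $B_e$ that of the target-side set. For this data: $\partial_\beta:\mathbf{1}_e\mapsto B_e-A_e$; $V_{\mathrm{macro}}=\{A_e\}\cup\{B_e\}$ (a set); the macrograph is the directed multigraph on $V_{\mathrm{macro}}$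 with edge set $Q_1$ and $e:A_e\to B_e$; $B_{\mathrm{macro}}:\mathbb{F}^{Q_1}\to\mathbb{F}^{V_{\mathrm{macro}}}$, $\mathbf{1}_e\mapsto\mathbf{1}_{B_e}-\mathbf{1}_{A_e}$; $\hat\phi:\mathbb{F}^{V_{\mathrm{macro}}}\to T(\mathbb{F}^{Q_0})$, $\mathbf{1}_w\mapsto w$; $\delta(F(\mathcal{H}_o))=\dim(\mathrm{Im}B_{\mathrm{macro}}\cap\mathrm{Ker}\hat\phi)$. A star is a directed multigraph with one centre vertex and all edges joining the centre to distinct leaves. *)

theory Defs
  imports Complex_Main "HOL-Library.Function_Algebras"
begin

text \<open>An oriented hypergraph is given by finite sets Q0 (vertices), Q1 (hyperedges)
  and an incidence matrix Boh : Q0 x Q1 -> {-1,0,+1}, represented as a function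
  'v => 'e => int (only its values on Q0 x Q1 matter).\<close>

definition oh_incidence :: "'v set \<Rightarrow> 'e set \<Rightarrow> ('v \<Rightarrow> 'e \<Rightarrow> int) \<Rightarrow> bool" where
  "oh_incidence Q0 Q1 Boh \<longleftrightarrow> (\<forall>v\<in>Q0. \<forall>e\<in>Q1. Boh v e \<in> {-1, 0, 1})"

definition oh_src :: "'v set \<Rightarrow> ('v \<Rightarrow> 'e \<Rightarrow> int) \<Rightarrow> 'e \<Rightarrow> 'v set" where
  "oh_src Q0 Boh e = {v\<in>Q0. Boh v e = -1}"

definition oh_tgt :: "'v set \<Rightarrow> ('v \<Rightarrow> 'e \<Rightarrow> int) \<Rightarrow> 'e \<Rightarrow> 'v set" where
  "oh_tgt Q0 Boh e = {v\<in>Q0. Boh v e = 1}"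

definition ind_vec :: "'v set \<Rightarrow> 'v \<Rightarrow> 'a::field" where
  "ind_vec H = (\<lambda>v. if v \<in> H then 1 else 0)"

definition F_A :: "'v set \<Rightarrow> ('v \<Rightarrow> 'e \<Rightarrow> int) \<Rightarrow> 'e \<Rightarrow> ('v \<Rightarrow> 'a::field)" where
  "F_A Q0 Boh e = ind_vec (oh_src Q0 Boh e)"

definition F_B :: "'v set \<Rightarrow> ('v \<Rightarrow> 'e \<Rightarrow> int) \<Rightarrow> 'e \<Rightarrow> ('v \<Rightarrow> 'a::field)" where
  "F_B Q0 Boh e = ind_vec (oh_tgt Q0 Boh e)"

definition V_macro :: "'v set \<Rightarrow> 'e set \<Rightarrow> ('v \<Rightarrow> 'e \<Rightarrow> int) \<Rightarrow> ('v \<Rightarrow> 'a::field) set" where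
  "V_macro Q0 Q1 Boh = F_A Q0 Boh ` Q1 \<union> F_B Q0 Boh ` Q1"

definition is_star :: "'w set \<Rightarrow> 'e set \<Rightarrow> ('e \<Rightarrow> 'w) \<Rightarrow> ('e \<Rightarrow> 'w) \<Rightarrow> bool" where
  "is_star V E tail head \<longleftrightarrow>
     (\<forall>e\<in>E. tail e \<in> V \<and> head e \<in> V) \<and>
     (\<exists>c\<in>V. \<exists>leaf. (\<forall>e\<in>E. (tail e = c \<and> head e = leaf e \<or> head e = c \<and> tail e = leaf e) \<and> leaf e \<noteq> c)
               \<and> inj_on leaf E \<and> V = insert c (leaf ` E))"

text \<open>Vectors in F^{V_macro} are functions on V_macro (zero outside).\<close>

definition B_macro :: "'v set \<Rightarrow> 'e set \<Rightarrow> ('v \<Rightarrow> 'e \<Rightarrow> int) \<Rightarrow> ('e \<Rightarrow> 'a::field) \<Rightarrow> (('v \<Rightarrow> 'a) \<Rightarrow> 'a)" where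
  "B_macro Q0 Q1 Boh x = (\<lambda>w. \<Sum>e\<in>Q1. x e *
      ((if w = F_B Q0 Boh e then 1 else 0) - (if w = F_A Q0 Boh e then 1 else 0)))"

text \<open>phi_hat : F^{V_macro} -> T(F^{Q0}), 1_w |-> w. All w lie in T^1(F^{Q0}) = F^{Q0},
  which embeds injectively into T(F^{Q0}); so we record phi_hat with values in F^{Q0}.\<close>
definition phi_hat :: "'v set \<Rightarrow> 'e set \<Rightarrow> ('v \<Rightarrow> 'e \<Rightarrow> int) \<Rightarrow> (('v \<Rightarrow> 'a::field) \<Rightarrow> 'a) \<Rightarrow> ('v \<Rightarrow> 'a)" where
  "phi_hat Q0 Q1 Boh y = (\<lambda>v. \<Sum>w\<in>V_macro Q0 Q1 Boh. y w * w v)"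

definition im_B_macro :: "'v set \<Rightarrow> 'e set \<Rightarrow> ('v \<Rightarrow> 'e \<Rightarrow> int) \<Rightarrow> (('v \<Rightarrow> 'a::field) \<Rightarrow> 'a) set" where
  "im_B_macro Q0 Q1 Boh = {B_macro Q0 Q1 Boh x | x. \<forall>e. e \<notin> Q1 \<longrightarrow> x e = 0}"

definition ker_phi_hat :: "'v set \<Rightarrow> 'e set \<Rightarrow> ('v \<Rightarrow> 'e \<Rightarrow> int) \<Rightarrow> (('v \<Rightarrow> 'a::field) \<Rightarrow> 'a) set" where
  "ker_phi_hat Q0 Q1 Boh = {y. (\<forall>w. w \<notin> V_macro Q0 Q1 Boh \<longrightarrow> y w = 0) \<and> phi_hat Q0 Q1 Boh y = (\<lambda>_. 0)}"

definition delta_F :: "'v set \<Rightarrow> 'e set \<Rightarrow> ('v \<Rightarrow> 'e \<Rightarrow> int) \<Rightarrow> 'a::field itself \<Rightarrow> nat" where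
  "delta_F Q0 Q1 Boh _ = vector_space.dim (\<lambda>(c::'a) (f :: ('v \<Rightarrow> 'a) \<Rightarrow> 'a). \<lambda>w. c * f w)
      (im_B_macro Q0 Q1 Boh \<inter> ker_phi_hat Q0 Q1 Boh)"

definition affinely_dependent_family :: "'i set \<Rightarrow> ('i \<Rightarrow> 'v \<Rightarrow> 'a::field) \<Rightarrow> bool" where
  "affinely_dependent_family I u \<longleftrightarrow>
     (\<exists>c. (\<exists>i\<in>I. c i \<noteq> 0) \<and> (\<Sum>i\<in>I. c i) = 0 \<and> (\<forall>v. (\<Sum>i\<in>I. c i * u i v) = 0))"

end

theory Submission
  imports Defs
begin

(* Since all hyperedges have the same source side S, every hyperedge e is an arrow from the
   centre 1_S to the leaf 1_{H_e}; the leaves are pairwise distinct and differ from 1_S, because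
   a vertex of S is a source, hence not a target, of every hyperedge. So y = B_macro x takes the
   value x_e at the leaf 1_{H_e}, and phi_hat y = sum_e x_e 1_{H_e} - (sum_e x_e) 1_S; evaluating
   at a vertex of S shows that y lies in Ker phi_hat iff (x_e) is an affine dependence of the
   1_{H_e}. As Im B_macro \<inter> Ker phi_hat consists of functions supported on the finite set
   V_macro, its dimension is positive iff it contains a nonzero element.
   For the bound r \<ge> 4: at a vertex lying in exactly one of two of the sets H_e, the nonzero
   coefficients of an affine dependence split into two groups, each summing to zero, so each
   group has at least two members. *)

lemma sum_fun_apply: "sum f A x = (\<Sum>a\<in>A. f a x)"
  by (induction A rule: infinite_finite_induct) auto

lemma ind_vec_eq_iff: "(ind_vec X :: 'v \<Rightarrow> 'a::field) = ind_vec Y \<longleftrightarrow> X = Y"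
  by (auto simp: ind_vec_def fun_eq_iff split: if_splits)

lemma card_ge_2_if_sum_nonzero_eq_0:
  fixes c :: "'i \<Rightarrow> 'a::comm_monoid_add"
  assumes "finite T" "T \<noteq> {}" "\<And>k. k \<in> T \<Longrightarrow> c k \<noteq> 0" "sum c T = 0"
  shows "2 \<le> card T"
proof (rule ccontr)
  assume "\<not> 2 \<le> card T"
  moreover have "card T \<noteq> 0" using assms(1,2) by simp
  ultimately have "card T = 1" by linarith
  then obtain k where "T = {k}" by (auto simp: card_1_singleton_iff)
  then show False using assms(3,4) by simp
qed

lemma affinely_dependent_indicators_card_ge_4:
  fixes I :: "'i set" and H :: "'i \<Rightarrow> 'v set"
  assumes "finite I" "inj_on H I"
    and "affinely_dependent_family I (\<lambda>i. ind_vec (H i) :: 'v \<Rightarrow> 'a::field)"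
  shows "4 \<le> card I"
proof -
  obtain c :: "'i \<Rightarrow> 'a" where c: "\<exists>i\<in>I. c i \<noteq> 0" "(\<Sum>i\<in>I. c i) = 0"
    "\<And>v. (\<Sum>i\<in>I. c i * ind_vec (H i) v) = 0"
    using assms(3) unfolding affinely_dependent_family_def by blast
  define J where "J = {i\<in>I. c i \<noteq> 0}"
  have J: "finite J" "J \<subseteq> I" "J \<noteq> {}" using assms(1) c(1) by (auto simp: J_def)
  have sum_J: "sum f J = sum f I" if "\<And>i. i \<in> I \<Longrightarrow> c i = 0 \<Longrightarrow> f i = 0" for f :: "'i \<Rightarrow> 'a"
    using that assms(1) by (intro sum.mono_neutral_left) (auto simp: J_def)
  have "2 \<le> card J"
    using J c(2) sum_J[of c] by (intro card_ge_2_if_sum_nonzero_eq_0) (auto simp: J_def)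
  then obtain i j where ij: "i \<in> J" "j \<in> J" "i \<noteq> j"
    using card_le_Suc0_iff_eq[OF J(1)] by fastforce
  then have "H i \<noteq> H j" using assms(2) J(2) by (auto dest: inj_onD)
  then obtain v where v: "v \<in> H i \<longleftrightarrow> v \<notin> H j" by blast
  define T where "T = {k\<in>J. v \<in> H k}"
  have "sum c T = (\<Sum>k\<in>J. c k * ind_vec (H k) v)"
    using J(1) by (simp add: T_def ind_vec_def sum.inter_filter if_distrib cong: if_cong)
  also have "\<dots> = 0" using c(3)[of v] sum_J[of "\<lambda>k. c k * ind_vec (H k) v"] by simp
  finally have sum_T: "sum c T = 0" .
  have sum_rest: "sum c (J - T) = 0"
    using sum_T J(1) c(2) sum_J[of c] by (simp add: sum_diff T_def)
  have "T \<subseteq> J" "T \<noteq> {}" "J - T \<noteq> {}" using ij v by (auto simp: T_def)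
  then have "2 \<le> card T" "2 \<le> card (J - T)"
    using J(1) sum_T sum_rest
    by (auto intro!: card_ge_2_if_sum_nonzero_eq_0[of _ c] intro: finite_subset simp: J_def)
  moreover have "card J = card T + card (J - T)"
    using J(1) by (simp add: T_def card_Diff_subset card_mono)
  moreover have "card J \<le> card I" using J(2) assms(1) by (rule card_mono[rotated])
  ultimately show ?thesis by linarith
qed

lemma (in vector_space) dim_pos_iff_ex_nonzero:
  assumes "finite G" "W \<subseteq> span G"
  shows "0 < dim W \<longleftrightarrow> (\<exists>y\<in>W. y \<noteq> 0)"
proof -
  obtain B where B: "B \<subseteq> W" "independent B" "W \<subseteq> span B" "card B = dim W"
    using basis_exists .
  have "finite B"
    using independent_span_bound[OF assms(1) B(2)] B(1) assms(2) by blast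
  then have "0 < dim W \<longleftrightarrow> B \<noteq> {}" using B(4) by auto
  also have "\<dots> \<longleftrightarrow> (\<exists>y\<in>W. y \<noteq> 0)"
  proof
    assume "B \<noteq> {}"
    then obtain y where "y \<in> B" by blast
    moreover have "y \<noteq> 0" using \<open>y \<in> B\<close> B(2) dependent_zero by blast
    ultimately show "\<exists>y\<in>W. y \<noteq> 0" using B(1) by blast
  next
    assume "\<exists>y\<in>W. y \<noteq> 0"
    then show "B \<noteq> {}" using B(3) by (auto simp: span_empty)
  qed
  finally show ?thesis .
qed

interpretation pointwise: vector_space "\<lambda>(c::'a::field) (f::'w \<Rightarrow> 'a). \<lambda>w. c * f w"
  by unfold_locales (simp_all add: fun_eq_iff algebra_simps)

lemma finite_support_in_pointwise_span:
  fixes y :: "'w \<Rightarrow> 'a::field"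
  assumes "finite V" "\<And>w. w \<notin> V \<Longrightarrow> y w = 0"
  shows "y \<in> pointwise.span ((\<lambda>w u. if u = w then 1 else 0) ` V)"
proof -
  have "y = (\<Sum>w\<in>V. (\<lambda>u. y w * (if u = w then 1 else 0)))"
  proof (rule ext)
    fix u
    have "(\<Sum>w\<in>V. (\<lambda>u. y w * (if u = w then 1 else 0))) u = (\<Sum>w\<in>V. if u = w then y w else 0)"
      unfolding sum_fun_apply by (rule sum.cong) auto
    then show "y u = (\<Sum>w\<in>V. (\<lambda>u. y w * (if u = w then 1 else 0))) u"
      using assms by (simp add: sum.delta)
  qed
  also have "\<dots> \<in> pointwise.span ((\<lambda>w u. if u = w then 1 else 0) ` V)"
    by (intro pointwise.span_sum pointwise.span_scale[where c = "y _"] pointwise.span_base) simp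
  finally show ?thesis .
qed

lemma phi_hat_B_macro:
  fixes Q0 :: "'v set" and x :: "'e \<Rightarrow> 'a::field"
  assumes "finite Q1"
  shows "phi_hat Q0 Q1 Boh (B_macro Q0 Q1 Boh x) v
    = (\<Sum>e\<in>Q1. x e * (F_B Q0 Boh e v - F_A Q0 Boh e v))"
proof -
  let ?V = "V_macro Q0 Q1 Boh :: ('v \<Rightarrow> 'a) set"
  have "finite ?V" using assms by (simp add: V_macro_def)
  then have boundary: "(\<Sum>w\<in>?V. ((if w = F_B Q0 Boh e then 1 else 0)
      - (if w = F_A Q0 Boh e then 1 else 0)) * w v) = F_B Q0 Boh e v - F_A Q0 Boh e v"
    if "e \<in> Q1" for e
  proof -
    have "F_A Q0 Boh e \<in> ?V" "F_B Q0 Boh e \<in> ?V" using that by (auto simp: V_macro_def)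
    moreover have "(\<Sum>w\<in>?V. ((if w = F_B Q0 Boh e then 1 else 0)
        - (if w = F_A Q0 Boh e then 1 else 0)) * w v)
      = (\<Sum>w\<in>?V. if w = F_B Q0 Boh e then w v else 0)
        - (\<Sum>w\<in>?V. if w = F_A Q0 Boh e then w v else 0)"
      unfolding sum_subtractf[symmetric] by (rule sum.cong) auto
    ultimately show ?thesis using \<open>finite ?V\<close> by (simp add: sum.delta')
  qed
  have "phi_hat Q0 Q1 Boh (B_macro Q0 Q1 Boh x) v = (\<Sum>e\<in>Q1. x e * (\<Sum>w\<in>?V.
      ((if w = F_B Q0 Boh e then 1 else 0) - (if w = F_A Q0 Boh e then 1 else 0)) * w v))"
    unfolding phi_hat_def B_macro_def sum_distrib_right sum_distrib_left mult.assoc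
    by (rule sum.swap)
  then show ?thesis by (simp add: boundary)
qed

lemma B_macro_outside_V_macro:
  "w \<notin> V_macro Q0 Q1 Boh \<Longrightarrow> B_macro Q0 Q1 Boh x w = 0"
  unfolding B_macro_def V_macro_def by (intro sum.neutral) auto

locale common_source_hypergraph =
  fixes Q0 :: "'v set" and Q1 :: "'e set" and Boh :: "'v \<Rightarrow> 'e \<Rightarrow> int" and S :: "'v set"
  assumes finite_Q1: "finite Q1"
    and Q1_nonempty: "Q1 \<noteq> {}"
    and S_nonempty: "S \<noteq> {}"
    and oh_src_eq: "\<And>e. e \<in> Q1 \<Longrightarrow> oh_src Q0 Boh e = S"
    and inj_on_oh_tgt: "inj_on (oh_tgt Q0 Boh) Q1"
begin

lemma F_A_eq: "e \<in> Q1 \<Longrightarrow> F_A Q0 Boh e = ind_vec S"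
  by (simp add: F_A_def oh_src_eq)

lemma source_notin_oh_tgt: "s \<in> S \<Longrightarrow> e \<in> Q1 \<Longrightarrow> s \<notin> oh_tgt Q0 Boh e"
  using oh_src_eq[of e] by (auto simp: oh_src_def oh_tgt_def)

lemma leaf_ne_centre: "e \<in> Q1 \<Longrightarrow> (ind_vec (oh_tgt Q0 Boh e) :: 'v \<Rightarrow> 'a::field) \<noteq> ind_vec S"
  using S_nonempty source_notin_oh_tgt by (auto simp: ind_vec_eq_iff)

lemma inj_on_leaves: "inj_on (\<lambda>e. ind_vec (oh_tgt Q0 Boh e) :: 'v \<Rightarrow> 'a::field) Q1"
  using inj_on_oh_tgt by (auto simp: inj_on_def ind_vec_eq_iff)

lemma V_macro_eq:
  "(V_macro Q0 Q1 Boh :: ('v \<Rightarrow> 'a::field) set)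
    = insert (ind_vec S) ((\<lambda>e. ind_vec (oh_tgt Q0 Boh e)) ` Q1)"
  using Q1_nonempty by (auto simp: V_macro_def F_A_eq F_B_def)

lemma macrograph_is_star:
  "is_star (V_macro Q0 Q1 Boh :: ('v \<Rightarrow> 'a::field) set) Q1 (F_A Q0 Boh) (F_B Q0 Boh)"
  unfolding is_star_def
proof (intro conjI bexI[of _ "ind_vec S"] exI[of _ "F_B Q0 Boh"])
  show "\<forall>e\<in>Q1. F_A Q0 Boh e \<in> V_macro Q0 Q1 Boh \<and> F_B Q0 Boh e \<in> V_macro Q0 Q1 Boh"
    by (auto simp: V_macro_def)
  show "\<forall>e\<in>Q1. (F_A Q0 Boh e = ind_vec S \<and> F_B Q0 Boh e = F_B Q0 Boh e
      \<or> F_B Q0 Boh e = ind_vec S \<and> F_A Q0 Boh e = F_B Q0 Boh e) \<and> F_B Q0 Boh e \<noteq> ind_vec S"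
    using leaf_ne_centre by (auto simp: F_A_eq F_B_def)
  show "inj_on (F_B Q0 Boh) Q1"
    using inj_on_leaves by (simp add: F_B_def[abs_def])
  show "V_macro Q0 Q1 Boh = insert (ind_vec S) (F_B Q0 Boh ` Q1)"
    by (simp add: V_macro_eq F_B_def[abs_def])
  show "ind_vec S \<in> V_macro Q0 Q1 Boh"
    by (simp add: V_macro_eq)
qed

lemma phi_hat_B_macro_eq:
  fixes x :: "'e \<Rightarrow> 'a::field"
  shows "phi_hat Q0 Q1 Boh (B_macro Q0 Q1 Boh x) v
    = (\<Sum>e\<in>Q1. x e * ind_vec (oh_tgt Q0 Boh e) v) - sum x Q1 * ind_vec S v"
proof -
  have "phi_hat Q0 Q1 Boh (B_macro Q0 Q1 Boh x) v
      = (\<Sum>e\<in>Q1. x e * (ind_vec (oh_tgt Q0 Boh e) v - ind_vec S v))"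
    using phi_hat_B_macro[OF finite_Q1, of Q0 Boh x v] by (simp add: F_A_eq F_B_def)
  then show ?thesis
    by (simp add: right_diff_distrib sum_subtractf sum_distrib_right)
qed

lemma B_macro_in_ker_phi_hat_iff:
  fixes x :: "'e \<Rightarrow> 'a::field"
  shows "B_macro Q0 Q1 Boh x \<in> ker_phi_hat Q0 Q1 Boh
    \<longleftrightarrow> sum x Q1 = 0 \<and> (\<forall>v. (\<Sum>e\<in>Q1. x e * ind_vec (oh_tgt Q0 Boh e) v) = 0)"
proof
  assume ker: "B_macro Q0 Q1 Boh x \<in> ker_phi_hat Q0 Q1 Boh"
  then have phi_zero: "(\<Sum>e\<in>Q1. x e * ind_vec (oh_tgt Q0 Boh e) v) = sum x Q1 * ind_vec S v" for v
    using phi_hat_B_macro_eq[of x v] by (simp add: ker_phi_hat_def fun_eq_iff)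
  obtain s where "s \<in> S" using S_nonempty by blast
  then have "sum x Q1 = 0"
    using phi_zero[of s] source_notin_oh_tgt by (simp add: ind_vec_def)
  then show "sum x Q1 = 0 \<and> (\<forall>v. (\<Sum>e\<in>Q1. x e * ind_vec (oh_tgt Q0 Boh e) v) = 0)"
    using phi_zero by simp
next
  assume "sum x Q1 = 0 \<and> (\<forall>v. (\<Sum>e\<in>Q1. x e * ind_vec (oh_tgt Q0 Boh e) v) = 0)"
  then show "B_macro Q0 Q1 Boh x \<in> ker_phi_hat Q0 Q1 Boh"
    by (auto simp: ker_phi_hat_def fun_eq_iff phi_hat_B_macro_eq B_macro_outside_V_macro)
qed

lemma B_macro_at_leaf:
  fixes x :: "'e \<Rightarrow> 'a::field"
  assumes "e \<in> Q1"
  shows "B_macro Q0 Q1 Boh x (ind_vec (oh_tgt Q0 Boh e)) = x e"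
proof -
  have "B_macro Q0 Q1 Boh x (ind_vec (oh_tgt Q0 Boh e)) = (\<Sum>f\<in>Q1. if f = e then x f else 0)"
    unfolding B_macro_def
  proof (rule sum.cong)
    fix f assume "f \<in> Q1"
    then show "x f * ((if ind_vec (oh_tgt Q0 Boh e) = F_B Q0 Boh f then 1 else 0)
        - (if ind_vec (oh_tgt Q0 Boh e) = F_A Q0 Boh f then 1 else 0)) = (if f = e then x f else 0)"
      using assms leaf_ne_centre inj_onD[OF inj_on_leaves, of e f]
      by (auto simp: F_A_eq F_B_def)
  qed simp
  also have "\<dots> = x e" using assms finite_Q1 by simp
  finally show ?thesis .
qed

lemma ex_nonzero_im_inter_ker_iff:
  "(\<exists>y \<in> (im_B_macro Q0 Q1 Boh \<inter> ker_phi_hat Q0 Q1 Boh :: (('v \<Rightarrow> 'a::field) \<Rightarrow> 'a) set). y \<noteq> 0)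
    \<longleftrightarrow> affinely_dependent_family Q1 (\<lambda>e. ind_vec (oh_tgt Q0 Boh e) :: 'v \<Rightarrow> 'a)"
proof
  assume "\<exists>y \<in> (im_B_macro Q0 Q1 Boh \<inter> ker_phi_hat Q0 Q1 Boh :: (('v \<Rightarrow> 'a) \<Rightarrow> 'a) set). y \<noteq> 0"
  then obtain x :: "'e \<Rightarrow> 'a" where x: "B_macro Q0 Q1 Boh x \<in> ker_phi_hat Q0 Q1 Boh"
    "B_macro Q0 Q1 Boh x \<noteq> 0"
    by (auto simp: im_B_macro_def)
  have "\<exists>e\<in>Q1. x e \<noteq> 0"
  proof (rule ccontr)
    assume "\<not> (\<exists>e\<in>Q1. x e \<noteq> 0)"
    then have "B_macro Q0 Q1 Boh x = 0" by (simp add: B_macro_def fun_eq_iff)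
    with x(2) show False ..
  qed
  then show "affinely_dependent_family Q1 (\<lambda>e. ind_vec (oh_tgt Q0 Boh e) :: 'v \<Rightarrow> 'a)"
    using x(1) unfolding affinely_dependent_family_def B_macro_in_ker_phi_hat_iff by blast
next
  assume "affinely_dependent_family Q1 (\<lambda>e. ind_vec (oh_tgt Q0 Boh e) :: 'v \<Rightarrow> 'a)"
  then obtain c :: "'e \<Rightarrow> 'a" and i where c: "i \<in> Q1" "c i \<noteq> 0" "sum c Q1 = 0"
    "\<forall>v. (\<Sum>e\<in>Q1. c e * ind_vec (oh_tgt Q0 Boh e) v) = 0"
    unfolding affinely_dependent_family_def by blast
  define x where "x e = (if e \<in> Q1 then c e else 0)" for e
  have "B_macro Q0 Q1 Boh x \<in> im_B_macro Q0 Q1 Boh \<inter> ker_phi_hat Q0 Q1 Boh"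
    using c(3,4) by (auto simp: im_B_macro_def x_def B_macro_in_ker_phi_hat_iff)
  moreover have "B_macro Q0 Q1 Boh x \<noteq> 0"
    using B_macro_at_leaf[of i x] c(1,2) by (metis x_def zero_fun_apply)
  ultimately show "\<exists>y \<in> (im_B_macro Q0 Q1 Boh \<inter> ker_phi_hat Q0 Q1 Boh :: (('v \<Rightarrow> 'a) \<Rightarrow> 'a) set). y \<noteq> 0"
    by blast
qed

lemma delta_F_pos_iff:
  "0 < delta_F Q0 Q1 Boh TYPE('a::field)
    \<longleftrightarrow> affinely_dependent_family Q1 (\<lambda>e. ind_vec (oh_tgt Q0 Boh e) :: 'v \<Rightarrow> 'a)"
proof -
  let ?V = "V_macro Q0 Q1 Boh :: ('v \<Rightarrow> 'a) set"
  have "finite ?V" using finite_Q1 by (simp add: V_macro_def)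
  moreover have "im_B_macro Q0 Q1 Boh \<inter> ker_phi_hat Q0 Q1 Boh
      \<subseteq> pointwise.span ((\<lambda>w u. if u = w then 1 else 0) ` ?V)"
    using \<open>finite ?V\<close>
    by (auto simp: ker_phi_hat_def intro: finite_support_in_pointwise_span)
  ultimately show ?thesis
    unfolding delta_F_def ex_nonzero_im_inter_ker_iff[symmetric]
    by (intro pointwise.dim_pos_iff_ex_nonzero) auto
qed

end

theorem proposition7p9:
  fixes Q0 :: "'v set" and Q1 :: "'e set" and Boh :: "'v \<Rightarrow> 'e \<Rightarrow> int"
    and S :: "'v set"
  assumes "finite Q0" and "finite Q1"
    and "oh_incidence Q0 Q1 Boh"
    and "Q1 \<noteq> {}"
    and "S \<noteq> {}"
    and "\<forall>e\<in>Q1. oh_src Q0 Boh e = S"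
    and "inj_on (oh_tgt Q0 Boh) Q1"
  shows "is_star (V_macro Q0 Q1 Boh :: ('v \<Rightarrow> 'a::field) set) Q1 (F_A Q0 Boh) (F_B Q0 Boh)
    \<and> (delta_F Q0 Q1 Boh TYPE('a) > 0 \<longleftrightarrow>
         affinely_dependent_family Q1 (\<lambda>e. (ind_vec (oh_tgt Q0 Boh e) :: 'v \<Rightarrow> 'a)))
    \<and> (delta_F Q0 Q1 Boh TYPE('a) > 0 \<longrightarrow> card Q1 \<ge> 4)"
proof -
  interpret common_source_hypergraph Q0 Q1 Boh S
    using assms by unfold_locales auto
  show ?thesis
    using macrograph_is_star delta_F_pos_iff
      affinely_dependent_indicators_card_ge_4[OF finite_Q1 inj_on_oh_tgt]
    by blast
qed

end
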